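(* For every $n\ge 15$ of the form $n=2^k-1$ there exist binary perfect (1-error-correcting) homogeneous codes of length $n$ that are not transitive.
   Context: A binary code $C\subseteq F^n$ containing $0^n$ is perfect if every $x\in F^n$ is at Hamming distance at most one from exactly one codeword. For $y\in C$, $STS(C,y)=\{\mathrm{supp}(x+y)\mid x\in C,\ d(x,y)=3\}$; $C$ is homogeneous if for every $y\in C$ there is $\pi\in S_n$ with $\pi(STS(C,y))=STS(C,0^n)$. $C$ is transitive if for every $y\in C$ there is a coordinate permutation $\pi\in S_n$ with $y+\pi(C)=C$ (equivalently, $\mathrm{Aut}(C)=\{(y,\pi)\mid y+\pi(C)=C\}$ has a subgroup acting transitively on $C$). *)

theory Defs
  imports Main "HOL-Combinatorics.Permutations"
begin

text \<open>Binary words of length n are represented by their supports, i.e. subsets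
of the coordinate set {0..<n}. Vector addition over F_2 is symmetric difference,
the Hamming distance is the cardinality of the symmetric difference, and the
all-zero word 0^n is the empty set.\<close>

definition words :: "nat \<Rightarrow> nat set set" where
  "words n = Pow {0..<n}"

definition wadd :: "nat set \<Rightarrow> nat set \<Rightarrow> nat set" where
  "wadd x y = (x - y) \<union> (y - x)"

definition hdist :: "nat set \<Rightarrow> nat set \<Rightarrow> nat" where
  "hdist x y = card (wadd x y)"

definition perfect_code :: "nat \<Rightarrow> nat set set \<Rightarrow> bool" where
  "perfect_code n C \<longleftrightarrow> C \<subseteq> words n \<and> {} \<in> C \<and>
     (\<forall>x \<in> words n. \<exists>!c. c \<in> C \<and> hdist x c \<le> 1)"

definition STS :: "nat set set \<Rightarrow> nat set \<Rightarrow> nat set set" where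
  "STS C y = {wadd x y | x. x \<in> C \<and> hdist x y = 3}"

definition perm_word :: "(nat \<Rightarrow> nat) \<Rightarrow> nat set \<Rightarrow> nat set" where
  "perm_word \<pi> x = \<pi> ` x"

definition perm_code :: "(nat \<Rightarrow> nat) \<Rightarrow> nat set set \<Rightarrow> nat set set" where
  "perm_code \<pi> C = perm_word \<pi> ` C"

definition homogeneous_code :: "nat \<Rightarrow> nat set set \<Rightarrow> bool" where
  "homogeneous_code n C \<longleftrightarrow>
     (\<forall>y \<in> C. \<exists>\<pi>. \<pi> permutes {0..<n} \<and> perm_code \<pi> (STS C y) = STS C {})"

definition transitive_code :: "nat \<Rightarrow> nat set set \<Rightarrow> bool" where
  "transitive_code n C \<longleftrightarrow>
     (\<forall>y \<in> C. \<exists>\<pi>. \<pi> permutes {0..<n} \<and> wadd y ` perm_code \<pi> C = C)"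

end

theory Submission
  imports Defs
begin

(* Label coordinate j by the number j + 1 < 2^k and let S z be the XOR of the labels in z,
   so that the Hamming code is {z. S z = 0}. Bits 1..3 of a label form a point u of F_2^3;
   let R z be the XOR over z of the unit vectors e_u (with e_0 = 0). For every g with values
   in {0, 1} and g 0 = 0 the switched code {z. S z = g (R z)} is perfect: a syndrome can only
   be corrected by flipping the label that agrees with it in bits 1..3. Translating the code
   by a codeword y replaces g by r \<mapsto> g (r + R y) + g (R y), and the triples of a switched
   code, i.e. its STS at 0, only depend on g at the eight values e_u + e_v + e_(u+v), zero or a
   line of the Fano plane. For a suitable switching mu, each of the 16 possible translates
   of mu is carried back to mu by a relabelling of F_2^k that is linear on bits 1..3 and
   flips bit 0 according to bits 1..3; this makes the code homogeneous. On the other hand, coordinate permutations preserve the number of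
   distinct STS(C, b) with b in STS(C, 0); this number is 7 for the code but 6 for its
   translate by the codeword {1, 3, 7, 13}, so the code is not transitive. *)

unbundle bit_operations_syntax

global_interpretation xor_sum: comm_monoid_set "xor :: nat \<Rightarrow> nat \<Rightarrow> nat" 0
  defines xor_sum = xor_sum.F ..

lemma xor_left_self_nat [simp]: "(a::nat) XOR (a XOR b) = b"
  by (simp add: xor.assoc[symmetric])

lemma xor_eq_0_iff_nat: "(a::nat) XOR b = 0 \<longleftrightarrow> a = b"
  by (metis xor_left_self_nat xor.right_neutral xor_self_eq)

lemma xor_left_cancel_iff_nat: "(a::nat) XOR b = a XOR c \<longleftrightarrow> b = c"
  by (metis xor_left_self_nat)

lemma xor_right_cancel_iff_nat: "(a::nat) XOR c = b XOR c \<longleftrightarrow> a = b"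
  using xor_left_cancel_iff_nat[of c a b] by (simp add: xor.commute)

lemma xor_less_power: "(a::nat) < 2 ^ k \<Longrightarrow> b < 2 ^ k \<Longrightarrow> a XOR b < 2 ^ k"
  by (metis take_bit_nat_eq_self_iff take_bit_xor)

lemma xor_le_1: "(a::nat) \<le> 1 \<Longrightarrow> b \<le> 1 \<Longrightarrow> a XOR b \<le> 1"
  using xor_less_power[of a 1 b] by simp

lemma xor_sum_wadd:
  assumes "finite a" "finite b"
  shows "xor_sum f (wadd a b) = xor_sum f a XOR xor_sum f b"
proof -
  have a: "a = (a - b) \<union> (a \<inter> b)" and b: "b = (b - a) \<union> (a \<inter> b)" by blast+
  have "xor_sum f a = xor_sum f (a - b) XOR xor_sum f (a \<inter> b)"
    by (subst a, rule xor_sum.union_disjoint) (use assms in auto)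
  moreover have "xor_sum f b = xor_sum f (b - a) XOR xor_sum f (a \<inter> b)"
    by (subst b, rule xor_sum.union_disjoint) (use assms in auto)
  moreover have "xor_sum f (wadd a b) = xor_sum f (a - b) XOR xor_sum f (b - a)"
    unfolding wadd_def by (rule xor_sum.union_disjoint) (use assms in auto)
  ultimately show ?thesis
    by (simp add: xor.assoc xor.commute xor.left_commute)
qed

lemma xor_sum_less_power:
  assumes "finite A" "\<And>j. j \<in> A \<Longrightarrow> f j < 2 ^ k"
  shows "xor_sum f A < 2 ^ k"
  using assms by (induction A rule: finite_induct) (simp_all add: xor_less_power)

lemma words_finite: "z \<in> words n \<Longrightarrow> finite z"
  unfolding words_def by (auto intro: finite_subset)

lemma wadd_in_words: "x \<in> words n \<Longrightarrow> y \<in> words n \<Longrightarrow> wadd x y \<in> words n"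
  unfolding words_def wadd_def by auto

lemma wadd_wadd_cancel [simp]: "wadd y (wadd y z) = z"
  unfolding wadd_def by auto

lemma wadd_commute: "wadd x y = wadd y x"
  unfolding wadd_def by auto

lemma wadd_self [simp]: "wadd x x = {}"
  unfolding wadd_def by auto

lemma wadd_empty [simp]: "wadd {} z = z" "wadd z {} = z"
  unfolding wadd_def by auto

lemma STS_eq: "STS C y = {w \<in> wadd y ` C. card w = 3}"
  unfolding STS_def hdist_def by (auto simp: wadd_commute)

definition mid_bits :: "nat \<Rightarrow> nat" where
  "mid_bits w = (w div 2) mod 8"

definition onehot :: "nat \<Rightarrow> nat" where
  "onehot u = (if u = 0 then 0 else 2 ^ u)"

lemma mid_bits_less: "mid_bits w < 8"
  by (simp add: mid_bits_def)

lemma mid_bits_xor: "mid_bits (a XOR b) = mid_bits a XOR mid_bits b"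
proof -
  have "take_bit 3 (drop_bit 1 (a XOR b)) = take_bit 3 (drop_bit 1 a) XOR take_bit 3 (drop_bit 1 b)"
    by simp
  then show ?thesis by (simp add: take_bit_eq_mod drop_bit_eq_div mid_bits_def)
qed

lemma mid_bits_le_1: "v \<le> 1 \<Longrightarrow> mid_bits v = 0"
  by (auto simp: mid_bits_def le_Suc_eq)

lemma mid_bits_xor_le_1: "v \<le> 1 \<Longrightarrow> mid_bits (a XOR v) = mid_bits a"
  by (simp add: mid_bits_xor mid_bits_le_1)

lemma div_16_xor: "((a::nat) XOR b) div 16 = a div 16 XOR b div 16"
  using drop_bit_xor[of 4 a b] by (simp add: drop_bit_eq_div)

lemma mod_2_xor: "((a::nat) XOR b) mod 2 = a mod 2 XOR b mod 2"
  using take_bit_xor[of 1 a b] by (simp add: take_bit_eq_mod)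

lemma label_decomp: "(x::nat) = 16 * (x div 16) + 2 * mid_bits x + x mod 2"
proof -
  have "x mod (2 * 8) = 2 * (x div 2 mod 8) + x mod 2" by (rule mod_mult2_eq)
  then show ?thesis using div_mult_mod_eq[of x 16] by (simp add: mid_bits_def)
qed

lemma eq_le_1_iff: "(c::nat) \<le> 1 \<Longrightarrow> x = c \<longleftrightarrow> x div 16 = 0 \<and> mid_bits x = 0 \<and> x mod 2 = c"
  using label_decomp[of x] by (auto simp: mid_bits_def le_Suc_eq)

lemma label_fields:
  assumes "A < 8" "E \<le> (1::nat)"
  shows "(16 * q + 2 * A + E) div 16 = q" "mid_bits (16 * q + 2 * A + E) = A"
    "(16 * q + 2 * A + E) mod 2 = E"
proof -
  have e: "E = 0 \<or> E = 1" using assms by auto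
  have "(16 * q + (2 * A + E)) div 16 = q + (2 * A + E) div 16" by simp
  moreover have "(2 * A + E) div 16 = 0" using assms by simp
  ultimately show "(16 * q + 2 * A + E) div 16 = q" by (simp add: add.assoc)
  have "(16 * q + 2 * A + E) div 2 = 8 * q + A" using e by auto
  then show "mid_bits (16 * q + 2 * A + E) = A" using assms by (simp add: mid_bits_def)
  have "16 * q + 2 * A + E = E + 2 * (8 * q + A)" by simp
  also have "\<dots> mod 2 = E mod 2" by (rule mod_mult_self2)
  finally show "(16 * q + 2 * A + E) mod 2 = E" using e by auto
qed

lemma all_less_8:
  "(\<forall>u::nat<8. P u) \<longleftrightarrow> P 0 \<and> P 1 \<and> P 2 \<and> P 3 \<and> P 4 \<and> P 5 \<and> P 6 \<and> P 7"
proof -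
  have "(\<forall>u::nat<8. P u) \<longleftrightarrow> (\<forall>u\<in>{..<8}. P u)" by auto
  then show ?thesis by (simp add: lessThan_nat_numeral lessThan_Suc conj_ac)
qed

section \<open>Switched Hamming codes\<close>

definition syndrome :: "nat set \<Rightarrow> nat" where
  "syndrome z = xor_sum (\<lambda>j. j + 1) z"

definition mid_syndrome :: "nat set \<Rightarrow> nat" where
  "mid_syndrome z = xor_sum (\<lambda>j. onehot (mid_bits (j + 1))) z"

definition switching :: "(nat \<Rightarrow> nat) \<Rightarrow> bool" where
  "switching g \<longleftrightarrow> g 0 = 0 \<and> (\<forall>r. g r \<le> 1)"

definition switched_code :: "nat \<Rightarrow> (nat \<Rightarrow> nat) \<Rightarrow> nat set set" where
  "switched_code n g = {z \<in> words n. syndrome z = g (mid_syndrome z)}"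

definition code_triples :: "nat \<Rightarrow> (nat \<Rightarrow> nat) \<Rightarrow> nat set set" where
  "code_triples n g = {b \<in> switched_code n g. card b = 3}"

definition translate_switching :: "(nat \<Rightarrow> nat) \<Rightarrow> nat \<Rightarrow> nat \<Rightarrow> nat" where
  "translate_switching g d r = g (r XOR d) XOR g d"

lemma syndrome_wadd: "finite a \<Longrightarrow> finite b \<Longrightarrow> syndrome (wadd a b) = syndrome a XOR syndrome b"
  unfolding syndrome_def by (rule xor_sum_wadd)

lemma mid_syndrome_wadd:
  "finite a \<Longrightarrow> finite b \<Longrightarrow> mid_syndrome (wadd a b) = mid_syndrome a XOR mid_syndrome b"
  unfolding mid_syndrome_def by (rule xor_sum_wadd)

lemma switching_translate: "switching g \<Longrightarrow> switching (translate_switching g d)"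
  unfolding switching_def translate_switching_def by (simp add: xor_le_1 del: One_nat_def)

definition flip :: "nat set \<Rightarrow> nat \<Rightarrow> nat set" where
  "flip x l = (if l = 0 then x else wadd x {l - 1})"

lemma syndrome_flip: "finite x \<Longrightarrow> syndrome (flip x l) = syndrome x XOR l"
  by (simp add: flip_def syndrome_wadd) (simp add: syndrome_def)

lemma mid_syndrome_flip:
  "finite x \<Longrightarrow> mid_syndrome (flip x l) = mid_syndrome x XOR onehot (mid_bits l)"
  by (simp add: flip_def mid_syndrome_wadd) (simp add: mid_syndrome_def mid_bits_def onehot_def)

lemma ball_1_words:
  assumes x: "x \<in> words n"
  shows "c \<in> words n \<and> hdist x c \<le> 1 \<longleftrightarrow> (\<exists>l \<le> n. c = flip x l)"
proof
  assume c: "c \<in> words n \<and> hdist x c \<le> 1"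
  have "wadd x c \<subseteq> {0..<n}" "finite (wadd x c)"
    using c x by (auto simp: words_def wadd_def intro: finite_subset)
  moreover have "card (wadd x c) \<le> 1" using c by (simp add: hdist_def)
  ultimately have "wadd x c = {} \<or> (\<exists>j<n. wadd x c = {j})"
    by (auto simp: le_Suc_eq card_1_singleton_iff)
  then show "\<exists>l \<le> n. c = flip x l"
  proof
    assume "wadd x c = {}"
    then have "c = flip x 0" by (metis flip_def wadd_wadd_cancel wadd_empty(2))
    then show ?thesis by blast
  next
    assume "\<exists>j<n. wadd x c = {j}"
    then obtain j where "j < n" "c = wadd x {j}" by (metis wadd_wadd_cancel)
    then have "j + 1 \<le> n" "c = flip x (j + 1)" by (simp_all add: flip_def)
    then show ?thesis by blast
  qed
next
  assume "\<exists>l \<le> n. c = flip x l"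
  then obtain l where "l \<le> n" "c = flip x l" by blast
  moreover have "l \<noteq> 0 \<Longrightarrow> {l - 1} \<in> words n" using \<open>l \<le> n\<close> by (simp add: words_def)
  ultimately show "c \<in> words n \<and> hdist x c \<le> 1"
    using x by (auto simp: flip_def hdist_def wadd_in_words)
qed

text \<open>The correcting label has to agree with the syndrome a outside bit 0, so it is
  determined by the value of g there.\<close>

lemma unique_correction:
  assumes a: "a < 2 ^ k" and k: "k \<ge> 1" and g: "\<And>r. g r \<le> (1::nat)"
  shows "\<exists>!l. l < 2 ^ k \<and> a XOR l = g (r XOR onehot (mid_bits l))"
proof -
  define v where "v = g (r XOR onehot (mid_bits a))"
  have "1 < (2::nat) ^ k" using k by (intro one_less_power) auto
  then have "a XOR v < 2 ^ k" using a g[of "r XOR _"]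
    by (intro xor_less_power) (auto simp: v_def intro: le_less_trans)
  moreover have "a XOR (a XOR v) = g (r XOR onehot (mid_bits (a XOR v)))"
    using g by (simp add: v_def mid_bits_xor_le_1)
  moreover have "l = a XOR v" if "a XOR l = g (r XOR onehot (mid_bits l))" for l
  proof -
    have "a XOR l \<le> 1" using g by (simp add: that)
    then have "mid_bits (a XOR (a XOR l)) = mid_bits a" by (rule mid_bits_xor_le_1)
    then have "mid_bits l = mid_bits a" by simp
    moreover have "l = a XOR (a XOR l)" by simp
    ultimately show ?thesis using that by (simp add: v_def)
  qed
  ultimately show ?thesis by blast
qed

lemma switched_code_ball_1_iff:
  assumes x: "x \<in> words n" and n: "n = 2 ^ k - 1"
  shows "c \<in> switched_code n g \<and> hdist x c \<le> 1 \<longleftrightarrow>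
    (\<exists>l < 2 ^ k. c = flip x l \<and> syndrome x XOR l = g (mid_syndrome x XOR onehot (mid_bits l)))"
proof -
  have pow: "2 ^ k = Suc n" using n by simp
  have "c \<in> switched_code n g \<and> hdist x c \<le> 1 \<longleftrightarrow>
      (c \<in> words n \<and> hdist x c \<le> 1) \<and> syndrome c = g (mid_syndrome c)"
    by (auto simp: switched_code_def)
  also have "\<dots> \<longleftrightarrow> (\<exists>l \<le> n. c = flip x l) \<and> syndrome c = g (mid_syndrome c)"
    using ball_1_words[OF x] by simp
  also have "\<dots> \<longleftrightarrow>
      (\<exists>l < 2 ^ k. c = flip x l \<and> syndrome x XOR l = g (mid_syndrome x XOR onehot (mid_bits l)))"
    using words_finite[OF x] by (auto simp: pow less_Suc_eq_le syndrome_flip mid_syndrome_flip)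
  finally show ?thesis .
qed

lemma perfect_switched_code:
  assumes n: "n = 2 ^ k - 1" and k: "k \<ge> 1" and g: "switching g"
  shows "perfect_code n (switched_code n g)"
proof -
  have "\<exists>!c. c \<in> switched_code n g \<and> hdist x c \<le> 1" if x: "x \<in> words n" for x
  proof -
    have "syndrome x < 2 ^ k" unfolding syndrome_def
      using x n by (intro xor_sum_less_power[OF words_finite[OF x]]) (auto simp: words_def)
    moreover have "\<And>r. g r \<le> 1" using g by (simp add: switching_def)
    ultimately have "\<exists>!l. l < 2 ^ k \<and> syndrome x XOR l = g (mid_syndrome x XOR onehot (mid_bits l))"
      by (rule unique_correction[OF _ k])
    then show ?thesis unfolding switched_code_ball_1_iff[OF x n] by blast
  qed
  moreover have "{} \<in> switched_code n g"
    using g by (simp add: switched_code_def switching_def words_def syndrome_def mid_syndrome_def)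
  ultimately show ?thesis by (auto simp: perfect_code_def switched_code_def)
qed

lemma switched_code_translate:
  assumes y: "y \<in> switched_code n g"
  shows "wadd y ` switched_code n g = switched_code n (translate_switching g (mid_syndrome y))"
proof -
  have yw: "y \<in> words n" and fy: "finite y" and yS: "syndrome y = g (mid_syndrome y)"
    using y by (auto simp: switched_code_def intro: words_finite)
  have iff: "wadd y z \<in> switched_code n (translate_switching g (mid_syndrome y)) \<longleftrightarrow>
      z \<in> switched_code n g" if z: "z \<in> words n" for z
  proof -
    have fz: "finite z" using z by (rule words_finite)
    have "syndrome (wadd y z) = g (mid_syndrome y) XOR syndrome z"
      using fy fz yS by (simp add: syndrome_wadd)
    moreover have "mid_syndrome (wadd y z) XOR mid_syndrome y = mid_syndrome z"
      using fy fz by (simp add: mid_syndrome_wadd xor.commute xor.left_commute)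
    ultimately show ?thesis using z yw
      by (simp add: switched_code_def translate_switching_def wadd_in_words)
        (metis xor.commute xor_left_cancel_iff_nat)
  qed
  show ?thesis
  proof
    show "wadd y ` switched_code n g \<subseteq> switched_code n (translate_switching g (mid_syndrome y))"
      using iff by (auto simp: switched_code_def)
    show "switched_code n (translate_switching g (mid_syndrome y)) \<subseteq> wadd y ` switched_code n g"
    proof
      fix w assume w: "w \<in> switched_code n (translate_switching g (mid_syndrome y))"
      then have "wadd y w \<in> words n" using yw by (simp add: switched_code_def wadd_in_words)
      then have "wadd y w \<in> switched_code n g" using iff[of "wadd y w"] w by simp
      then show "w \<in> wadd y ` switched_code n g" by (metis image_eqI wadd_wadd_cancel)
    qed
  qed
qed

lemma STS_switched_code:
  "y \<in> switched_code n g \<Longrightarrow>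
    STS (switched_code n g) y = code_triples n (translate_switching g (mid_syndrome y))"
  using switched_code_translate by (simp add: STS_eq code_triples_def)

lemma STS_switched_code_empty: "STS (switched_code n g) {} = code_triples n g"
  by (simp add: STS_eq code_triples_def)

definition in_GL3 :: "(nat \<Rightarrow> nat) \<Rightarrow> bool" where
  "in_GL3 \<alpha> \<longleftrightarrow> (\<forall>u<8. \<alpha> u < 8) \<and> (\<forall>a<8. \<forall>b<8. \<alpha> a = \<alpha> b \<longrightarrow> a = b) \<and>
     (\<forall>a<8. \<forall>b<8. \<alpha> (a XOR b) = \<alpha> a XOR \<alpha> b)"

definition relabel :: "(nat \<Rightarrow> nat) \<Rightarrow> nat set \<Rightarrow> nat \<Rightarrow> nat" where
  "relabel \<alpha> B w = 16 * (w div 16) + 2 * \<alpha> (mid_bits w) + (w mod 2 XOR of_bool (mid_bits w \<in> B))"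

definition relabel_perm :: "nat \<Rightarrow> (nat \<Rightarrow> nat) \<Rightarrow> nat set \<Rightarrow> nat \<Rightarrow> nat" where
  "relabel_perm n \<alpha> B j = (if j < n then relabel \<alpha> B (j + 1) - 1 else j)"

lemma in_GL3_less: "in_GL3 \<alpha> \<Longrightarrow> u < 8 \<Longrightarrow> \<alpha> u < 8"
  unfolding in_GL3_def by blast

lemma in_GL3_inj: "in_GL3 \<alpha> \<Longrightarrow> a < 8 \<Longrightarrow> b < 8 \<Longrightarrow> \<alpha> a = \<alpha> b \<Longrightarrow> a = b"
  unfolding in_GL3_def by blast

lemma in_GL3_xor: "in_GL3 \<alpha> \<Longrightarrow> a < 8 \<Longrightarrow> b < 8 \<Longrightarrow> \<alpha> (a XOR b) = \<alpha> a XOR \<alpha> b"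
  unfolding in_GL3_def by blast

lemma in_GL3_zero: "in_GL3 \<alpha> \<Longrightarrow> \<alpha> 0 = 0"
  using in_GL3_xor[of \<alpha> 0 0] by simp

lemma relabel_fields:
  assumes "in_GL3 \<alpha>"
  shows "relabel \<alpha> B w div 16 = w div 16" "mid_bits (relabel \<alpha> B w) = \<alpha> (mid_bits w)"
    "relabel \<alpha> B w mod 2 = w mod 2 XOR of_bool (mid_bits w \<in> B)"
proof -
  have A: "\<alpha> (mid_bits w) < 8" using assms mid_bits_less by (rule in_GL3_less)
  have E: "w mod 2 XOR of_bool (mid_bits w \<in> B) \<le> 1" by (intro xor_le_1) auto
  show "relabel \<alpha> B w div 16 = w div 16" "mid_bits (relabel \<alpha> B w) = \<alpha> (mid_bits w)"
    "relabel \<alpha> B w mod 2 = w mod 2 XOR of_bool (mid_bits w \<in> B)"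
    unfolding relabel_def by (rule label_fields[OF A E])+
qed

lemma relabel_inj:
  assumes \<alpha>: "in_GL3 \<alpha>" and eq: "relabel \<alpha> B w1 = relabel \<alpha> B w2"
  shows "w1 = w2"
proof -
  have "\<alpha> (mid_bits w1) = \<alpha> (mid_bits w2)"
    using arg_cong[OF eq, of mid_bits] by (simp add: relabel_fields[OF \<alpha>])
  then have mid: "mid_bits w1 = mid_bits w2" by (rule in_GL3_inj[OF \<alpha> mid_bits_less mid_bits_less])
  then have "w1 mod 2 XOR of_bool (mid_bits w1 \<in> B) = w2 mod 2 XOR of_bool (mid_bits w1 \<in> B)"
    using arg_cong[OF eq, of "\<lambda>w. w mod 2"] mid by (simp add: relabel_fields[OF \<alpha>])
  then have "w1 mod 2 = w2 mod 2" by (simp add: xor_right_cancel_iff_nat)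
  moreover have "w1 div 16 = w2 div 16"
    using arg_cong[OF eq, of "\<lambda>w. w div 16"] by (simp add: relabel_fields[OF \<alpha>])
  ultimately show ?thesis using label_decomp[of w1] label_decomp[of w2] mid by simp
qed

lemma relabel_zero: "in_GL3 \<alpha> \<Longrightarrow> 0 \<notin> B \<Longrightarrow> relabel \<alpha> B 0 = 0"
  by (simp add: relabel_def mid_bits_def in_GL3_zero)

lemma relabel_less_power:
  assumes \<alpha>: "in_GL3 \<alpha>" and k: "k \<ge> 4" and w: "w < 2 ^ k"
  shows "relabel \<alpha> B w < 2 ^ k"
proof -
  have "(2::nat) ^ k = 2 ^ (4 + (k - 4))" using k by simp
  then have pow: "(2::nat) ^ k = 2 ^ (k - 4) * 16" by (simp add: power_add)
  then have "relabel \<alpha> B w div 16 < 2 ^ (k - 4)"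
    using w by (simp add: div_less_iff_less_mult relabel_fields(1)[OF \<alpha>])
  then show ?thesis using pow by (simp add: div_less_iff_less_mult)
qed

lemma relabel_perm_label:
  assumes "in_GL3 \<alpha>" "0 \<notin> B" "j < n"
  shows "relabel_perm n \<alpha> B j + 1 = relabel \<alpha> B (j + 1)"
proof -
  have "relabel \<alpha> B (j + 1) \<noteq> 0"
    using relabel_inj[OF assms(1), of B "j + 1" 0] relabel_zero[OF assms(1,2)] by auto
  then show ?thesis using assms(3) by (simp add: relabel_perm_def)
qed

lemma relabel_perm_permutes:
  assumes n: "n = 2 ^ k - 1" and k: "k \<ge> 4" and \<alpha>: "in_GL3 \<alpha>" and B: "0 \<notin> B"
  shows "relabel_perm n \<alpha> B permutes {0..<n}"
proof -
  let ?p = "relabel_perm n \<alpha> B"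
  have into: "?p j < n" if "j < n" for j
  proof -
    have "j + 1 < 2 ^ k" using that n by simp
    then have "relabel \<alpha> B (j + 1) < 2 ^ k" by (rule relabel_less_power[OF \<alpha> k])
    then show ?thesis using relabel_perm_label[OF \<alpha> B that] n by simp
  qed
  have "inj_on ?p {0..<n}"
  proof (rule inj_onI)
    fix i j assume "i \<in> {0..<n}" "j \<in> {0..<n}" "?p i = ?p j"
    then have "relabel \<alpha> B (i + 1) = relabel \<alpha> B (j + 1)"
      using relabel_perm_label[OF \<alpha> B, of i n] relabel_perm_label[OF \<alpha> B, of j n] by simp
    then show "i = j" using relabel_inj[OF \<alpha>] by fastforce
  qed
  moreover have "?p ` {0..<n} = {0..<n}" by (rule endo_inj_surj) (use into \<open>inj_on ?p {0..<n}\<close> in auto)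
  ultimately have "bij_betw ?p {0..<n} {0..<n}" by (simp add: bij_betw_def)
  then show ?thesis by (rule bij_imp_permutes) (simp add: relabel_perm_def)
qed

definition switched_triple :: "(nat \<Rightarrow> nat) \<Rightarrow> nat \<Rightarrow> nat \<Rightarrow> nat \<Rightarrow> bool" where
  "switched_triple g w1 w2 w3 \<longleftrightarrow>
     w1 XOR w2 XOR w3 = g (onehot (mid_bits w1) XOR onehot (mid_bits w2) XOR onehot (mid_bits w3))"

definition line_syndrome :: "nat \<Rightarrow> nat \<Rightarrow> nat" where
  "line_syndrome u v = onehot u XOR onehot v XOR onehot (u XOR v)"

definition flip_parity :: "nat set \<Rightarrow> nat \<Rightarrow> nat \<Rightarrow> nat" where
  "flip_parity B u v = of_bool (u \<in> B) XOR of_bool (v \<in> B) XOR of_bool (u XOR v \<in> B)"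

definition relabel_compatible ::
    "(nat \<Rightarrow> nat) \<Rightarrow> nat set \<Rightarrow> (nat \<Rightarrow> nat) \<Rightarrow> (nat \<Rightarrow> nat) \<Rightarrow> bool" where
  "relabel_compatible \<alpha> B g1 g2 \<longleftrightarrow> (\<forall>u<8. \<forall>v<8.
     g1 (line_syndrome u v) = g2 (line_syndrome (\<alpha> u) (\<alpha> v)) XOR flip_parity B u v)"

lemma triple_in_switched_code_iff:
  assumes "j1 < n" "j2 < n" "j3 < n" "j1 \<noteq> j2" "j2 \<noteq> j3" "j1 \<noteq> j3"
  shows "{j1, j2, j3} \<in> switched_code n g \<longleftrightarrow> switched_triple g (j1 + 1) (j2 + 1) (j3 + 1)"
  using assms
  by (simp add: switched_code_def words_def syndrome_def mid_syndrome_def switched_triple_def)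

lemma relabel_xor3_fields:
  fixes B :: "nat set" and w1 w2 w3 :: nat
  assumes \<alpha>: "in_GL3 \<alpha>"
  defines "Y \<equiv> relabel \<alpha> B w1 XOR relabel \<alpha> B w2 XOR relabel \<alpha> B w3"
  shows "Y div 16 = (w1 XOR w2 XOR w3) div 16"
    and "mid_bits Y = \<alpha> (mid_bits (w1 XOR w2 XOR w3))"
    and "Y mod 2 = (w1 XOR w2 XOR w3) mod 2 XOR
      (of_bool (mid_bits w1 \<in> B) XOR of_bool (mid_bits w2 \<in> B) XOR of_bool (mid_bits w3 \<in> B))"
proof -
  have u: "mid_bits w2 XOR mid_bits w3 < 8"
    using xor_less_power[of "mid_bits w2" 3 "mid_bits w3"] mid_bits_less by simp
  show "Y div 16 = (w1 XOR w2 XOR w3) div 16"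
    by (simp add: Y_def div_16_xor relabel_fields[OF \<alpha>])
  show "mid_bits Y = \<alpha> (mid_bits (w1 XOR w2 XOR w3))"
    using in_GL3_xor[OF \<alpha> mid_bits_less u] in_GL3_xor[OF \<alpha> mid_bits_less mid_bits_less]
    by (simp add: Y_def mid_bits_xor relabel_fields[OF \<alpha>])
  show "Y mod 2 = (w1 XOR w2 XOR w3) mod 2 XOR
      (of_bool (mid_bits w1 \<in> B) XOR of_bool (mid_bits w2 \<in> B) XOR of_bool (mid_bits w3 \<in> B))"
    by (simp add: Y_def mod_2_xor relabel_fields[OF \<alpha>] xor.assoc xor.commute xor.left_commute)
qed

text \<open>A triple condition forces bits 1..3 of the three labels to be collinear, u3 = u1 + u2,
  and in that case compatibility matches the two conditions in bit 0.\<close>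

lemma relabel_switched_triple_iff:
  assumes \<alpha>: "in_GL3 \<alpha>" and g1: "switching g1" and g2: "switching g2"
    and compat: "relabel_compatible \<alpha> B g1 g2"
  shows "switched_triple g1 w1 w2 w3 \<longleftrightarrow>
    switched_triple g2 (relabel \<alpha> B w1) (relabel \<alpha> B w2) (relabel \<alpha> B w3)"
proof -
  define u1 u2 u3 where "u1 = mid_bits w1" and "u2 = mid_bits w2" and "u3 = mid_bits w3"
  define X where "X = w1 XOR w2 XOR w3"
  define P where "P = of_bool (u1 \<in> B) XOR of_bool (u2 \<in> B) XOR (of_bool (u3 \<in> B) :: nat)"
  define G1 where "G1 = g1 (onehot u1 XOR onehot u2 XOR onehot u3)"
  define G2 where "G2 = g2 (onehot (\<alpha> u1) XOR onehot (\<alpha> u2) XOR onehot (\<alpha> u3))"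
  note Y = relabel_xor3_fields[OF \<alpha>, of B w1 w2 w3, folded X_def u1_def u2_def u3_def]
  have u: "u1 < 8" "u2 < 8" "u3 < 8" using mid_bits_less by (simp_all add: u1_def u2_def u3_def)
  have XU: "mid_bits X = u1 XOR u2 XOR u3" by (simp add: X_def mid_bits_xor u1_def u2_def u3_def)
  have "G1 \<le> 1" "G2 \<le> 1" using g1 g2 by (simp_all add: switching_def G1_def G2_def)
  have "switched_triple g1 w1 w2 w3 \<longleftrightarrow> X = G1"
    by (simp add: switched_triple_def X_def G1_def u1_def u2_def u3_def)
  then have L: "switched_triple g1 w1 w2 w3 \<longleftrightarrow> X div 16 = 0 \<and> mid_bits X = 0 \<and> X mod 2 = G1"
    using eq_le_1_iff[OF \<open>G1 \<le> 1\<close>, of X] by simp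
  have "switched_triple g2 (relabel \<alpha> B w1) (relabel \<alpha> B w2) (relabel \<alpha> B w3) \<longleftrightarrow>
      relabel \<alpha> B w1 XOR relabel \<alpha> B w2 XOR relabel \<alpha> B w3 = G2"
    by (simp add: switched_triple_def G2_def relabel_fields[OF \<alpha>] u1_def u2_def u3_def)
  then have R: "switched_triple g2 (relabel \<alpha> B w1) (relabel \<alpha> B w2) (relabel \<alpha> B w3) \<longleftrightarrow>
      X div 16 = 0 \<and> \<alpha> (mid_bits X) = 0 \<and> X mod 2 XOR P = G2"
    using eq_le_1_iff[OF \<open>G2 \<le> 1\<close>, of "relabel \<alpha> B w1 XOR relabel \<alpha> B w2 XOR relabel \<alpha> B w3"]
      Y by (simp add: P_def)
  show ?thesis
  proof (cases "u3 = u1 XOR u2")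
    case True
    have "\<alpha> u3 = \<alpha> u1 XOR \<alpha> u2" using True in_GL3_xor[OF \<alpha> u(1,2)] by simp
    moreover have "g1 (line_syndrome u1 u2) =
        g2 (line_syndrome (\<alpha> u1) (\<alpha> u2)) XOR flip_parity B u1 u2"
      using compat u(1,2) unfolding relabel_compatible_def by blast
    ultimately have "G1 = G2 XOR P"
      using True by (simp add: line_syndrome_def flip_parity_def G1_def G2_def P_def)
    then have "X mod 2 = G1 \<longleftrightarrow> X mod 2 XOR P = G2"
      by (metis xor_left_cancel_iff_nat xor.commute xor_left_self_nat)
    moreover have "mid_bits X = 0" using True XU by (simp add: xor.left_commute)
    ultimately show ?thesis using L R in_GL3_zero[OF \<alpha>] by simp
  next
    case False
    then have "mid_bits X \<noteq> 0" using XU by (metis xor_eq_0_iff_nat xor.assoc)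
    moreover have "\<alpha> (mid_bits X) \<noteq> 0 \<longleftrightarrow> mid_bits X \<noteq> 0"
      using in_GL3_inj[OF \<alpha> mid_bits_less zero_less_numeral] in_GL3_zero[OF \<alpha>] by metis
    ultimately show ?thesis using L R by simp
  qed
qed

lemma words_card_3:
  assumes "b \<in> words n" "card b = 3"
  obtains j1 j2 j3 where "b = {j1, j2, j3}" "j1 < n" "j2 < n" "j3 < n"
    "j1 \<noteq> j2" "j2 \<noteq> j3" "j1 \<noteq> j3"
proof -
  obtain x y z where b: "b = {x, y, z}" "x \<noteq> y" "y \<noteq> z" "x \<noteq> z"
    using assms(2) by (auto simp: card_3_iff)
  moreover have "x < n" "y < n" "z < n" using assms(1) b by (auto simp: words_def)
  ultimately show ?thesis using that by blast
qed

lemma perm_code_card_3_eq: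
  assumes \<pi>: "\<pi> permutes {0..<n}" and C1: "C1 \<subseteq> words n" and C2: "C2 \<subseteq> words n"
    and iff: "\<And>b. b \<in> words n \<Longrightarrow> card b = 3 \<Longrightarrow> b \<in> C1 \<longleftrightarrow> \<pi> ` b \<in> C2"
  shows "perm_code \<pi> {b \<in> C1. card b = 3} = {b \<in> C2. card b = 3}"
proof
  have card: "card (\<pi> ` b) = card b" for b
    using permutes_inj[OF \<pi>] by (simp add: card_image inj_on_subset)
  show "perm_code \<pi> {b \<in> C1. card b = 3} \<subseteq> {b \<in> C2. card b = 3}"
    using C1 iff card by (auto simp: perm_code_def perm_word_def)
  show "{b \<in> C2. card b = 3} \<subseteq> perm_code \<pi> {b \<in> C1. card b = 3}"
  proof
    fix b' assume b': "b' \<in> {b \<in> C2. card b = 3}"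
    define b where "b = inv \<pi> ` b'"
    have b'_eq: "b' = \<pi> ` b" by (simp add: b_def image_image permutes_inverses(1)[OF \<pi>])
    have "b \<subseteq> inv \<pi> ` {0..<n}" using b' C2 by (auto simp: b_def words_def)
    then have "b \<in> words n" using permutes_image[OF permutes_inv[OF \<pi>]] by (simp add: words_def)
    moreover have "card b = 3" using b' card[of b] by (simp add: b'_eq)
    ultimately have "b \<in> {b \<in> C1. card b = 3}" using iff b' by (simp add: b'_eq)
    then show "b' \<in> perm_code \<pi> {b \<in> C1. card b = 3}" by (simp add: perm_code_def perm_word_def b'_eq)
  qed
qed

lemma relabel_perm_code_triples:
  assumes n: "n = 2 ^ k - 1" and k: "k \<ge> 4" and \<alpha>: "in_GL3 \<alpha>" and B: "0 \<notin> B"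
    and g1: "switching g1" and g2: "switching g2" and compat: "relabel_compatible \<alpha> B g1 g2"
  shows "perm_code (relabel_perm n \<alpha> B) (code_triples n g1) = code_triples n g2"
  unfolding code_triples_def
proof (rule perm_code_card_3_eq)
  let ?p = "relabel_perm n \<alpha> B"
  show p: "?p permutes {0..<n}" by (rule relabel_perm_permutes[OF n k \<alpha> B])
  show "switched_code n g1 \<subseteq> words n" "switched_code n g2 \<subseteq> words n"
    by (auto simp: switched_code_def)
  fix b assume "b \<in> words n" "card b = 3"
  then obtain j1 j2 j3 where b: "b = {j1, j2, j3}" and j: "j1 < n" "j2 < n" "j3 < n"
    and d: "j1 \<noteq> j2" "j2 \<noteq> j3" "j1 \<noteq> j3" by (rule words_card_3)
  have pj: "?p j1 < n" "?p j2 < n" "?p j3 < n" using j permutes_in_image[OF p] by auto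
  have pd: "?p j1 \<noteq> ?p j2" "?p j2 \<noteq> ?p j3" "?p j1 \<noteq> ?p j3"
    using d permutes_inj[OF p] by (auto dest: injD)
  have "b \<in> switched_code n g1 \<longleftrightarrow> switched_triple g1 (j1 + 1) (j2 + 1) (j3 + 1)"
    unfolding b by (rule triple_in_switched_code_iff[OF j d])
  also have "\<dots> \<longleftrightarrow> switched_triple g2 (?p j1 + 1) (?p j2 + 1) (?p j3 + 1)"
    unfolding relabel_perm_label[OF \<alpha> B j(1)] relabel_perm_label[OF \<alpha> B j(2)]
      relabel_perm_label[OF \<alpha> B j(3)]
    by (rule relabel_switched_triple_iff[OF \<alpha> g1 g2 compat])
  also have "\<dots> \<longleftrightarrow> ?p ` b \<in> switched_code n g2"
    unfolding b using triple_in_switched_code_iff[OF pj pd] by simp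
  finally show "b \<in> switched_code n g1 \<longleftrightarrow> ?p ` b \<in> switched_code n g2" .
qed

section \<open>An invariant under coordinate permutations\<close>

definition STS_count :: "nat set set \<Rightarrow> nat" where
  "STS_count D = card ((\<lambda>b. STS D b) ` STS D {})"

lemma perm_word_wadd: "inj \<pi> \<Longrightarrow> perm_word \<pi> (wadd x y) = wadd (perm_word \<pi> x) (perm_word \<pi> y)"
  by (auto simp: perm_word_def wadd_def image_set_diff image_Un)

lemma card_perm_word: "inj \<pi> \<Longrightarrow> card (perm_word \<pi> x) = card x"
  by (simp add: perm_word_def card_image inj_on_subset)

lemma inj_perm_code:
  assumes "inj \<pi>"
  shows "inj (perm_code \<pi>)"
proof -
  have "inj (perm_word \<pi>)"
    unfolding perm_word_def using assms by (auto intro!: injI simp: inj_image_eq_iff)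
  then show ?thesis unfolding perm_code_def by (auto intro!: injI simp: inj_image_eq_iff)
qed

lemma STS_perm_code:
  assumes "inj \<pi>"
  shows "STS (perm_code \<pi> D) (perm_word \<pi> y) = perm_code \<pi> (STS D y)"
proof -
  have "wadd (perm_word \<pi> y) ` perm_code \<pi> D = perm_word \<pi> ` (wadd y ` D)"
    by (auto simp: perm_code_def perm_word_wadd[OF assms] image_image)
  then show ?thesis by (auto simp: STS_eq perm_code_def card_perm_word[OF assms])
qed

lemma STS_count_perm_code:
  assumes "inj \<pi>"
  shows "STS_count (perm_code \<pi> D) = STS_count D"
proof -
  have "STS (perm_code \<pi> D) {} = perm_word \<pi> ` STS D {}"
    using STS_perm_code[OF assms, of D "{}"] by (simp add: perm_word_def perm_code_def)
  then have "(\<lambda>b. STS (perm_code \<pi> D) b) ` STS (perm_code \<pi> D) {} =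
      perm_code \<pi> ` ((\<lambda>b. STS D b) ` STS D {})"
    by (simp add: image_image STS_perm_code[OF assms])
  then show ?thesis
    unfolding STS_count_def using inj_perm_code[OF assms] by (simp add: card_image inj_on_subset)
qed

lemma STS_count_translate:
  assumes "transitive_code n C" "y \<in> C"
  shows "STS_count (wadd y ` C) = STS_count C"
proof -
  obtain \<pi> where \<pi>: "\<pi> permutes {0..<n}" and eq: "wadd y ` perm_code \<pi> C = C"
    using assms unfolding transitive_code_def by blast
  have "wadd y ` C = wadd y ` wadd y ` perm_code \<pi> C" by (simp only: eq)
  also have "\<dots> = perm_code \<pi> C" by (simp add: image_image)
  finally show ?thesis using STS_count_perm_code[OF permutes_inj[OF \<pi>]] by simp
qed

lemma card_image_eq_if_same_fibres:
  assumes "\<And>x y. x \<in> A \<Longrightarrow> y \<in> A \<Longrightarrow> f x = f y \<longleftrightarrow> h x = h y"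
  shows "card (f ` A) = card (h ` A)"
proof -
  let ?S = "(\<lambda>x. (f x, h x)) ` A"
  have "inj_on fst ?S" "inj_on snd ?S" using assms by (auto simp: inj_on_def)
  then have "card (fst ` ?S) = card (snd ` ?S)" by (simp add: card_image)
  then show ?thesis by (simp add: image_image)
qed

definition line_syndromes :: "nat list" where
  "line_syndromes = [0, 14, 50, 84, 104, 152, 164, 194]"

lemma line_syndrome_mem: "u < 8 \<Longrightarrow> v < 8 \<Longrightarrow> line_syndrome u v \<in> set line_syndromes"
proof -
  have "\<forall>u<8. \<forall>v<8. line_syndrome u v \<in> set line_syndromes"
    unfolding all_less_8 by (simp add: line_syndrome_def onehot_def line_syndromes_def)
  then show "u < 8 \<Longrightarrow> v < 8 \<Longrightarrow> line_syndrome u v \<in> set line_syndromes" by blast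
qed

lemma mid_syndrome_code_triple:
  assumes g: "switching g" and b: "b \<in> code_triples n g"
  shows "mid_syndrome b \<in> set line_syndromes"
proof -
  have "b \<in> words n" "card b = 3" using b by (auto simp: code_triples_def switched_code_def)
  then obtain j1 j2 j3 where bj: "b = {j1, j2, j3}" and j: "j1 < n" "j2 < n" "j3 < n"
    and d: "j1 \<noteq> j2" "j2 \<noteq> j3" "j1 \<noteq> j3" by (rule words_card_3)
  define u1 u2 u3 where "u1 = mid_bits (j1 + 1)" and "u2 = mid_bits (j2 + 1)" and "u3 = mid_bits (j3 + 1)"
  have "switched_triple g (j1 + 1) (j2 + 1) (j3 + 1)"
    using b triple_in_switched_code_iff[OF j d] by (simp add: code_triples_def bj)
  then have "(j1 + 1) XOR (j2 + 1) XOR (j3 + 1) \<le> 1"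
    using g by (simp add: switched_triple_def switching_def)
  then have "mid_bits ((j1 + 1) XOR (j2 + 1) XOR (j3 + 1)) = 0" by (rule mid_bits_le_1)
  then have "u1 XOR u2 XOR u3 = 0" by (simp add: mid_bits_xor u1_def u2_def u3_def)
  then have "u3 = u1 XOR u2" by (metis xor_eq_0_iff_nat xor.assoc)
  moreover have "mid_syndrome b = onehot u1 XOR onehot u2 XOR onehot u3"
    using d by (simp add: bj mid_syndrome_def u1_def u2_def u3_def)
  ultimately show ?thesis
    using line_syndrome_mem[OF mid_bits_less mid_bits_less] by (simp add: line_syndrome_def u1_def u2_def)
qed

lemma code_triple_exists:
  assumes n: "n \<ge> 15" and r: "r \<in> set line_syndromes" and v: "v \<le> 1" and r0: "r = 0 \<Longrightarrow> v = 0"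
  shows "\<exists>b \<in> words n. card b = 3 \<and> syndrome b = v \<and> mid_syndrome b = r"
proof -
  have sub: "\<And>b. b \<subseteq> {0..<14} \<Longrightarrow> b \<in> words n" using n by (auto simp: words_def)
  have vv: "v = 0 \<or> v = 1" using v by auto
  have "r = 0 \<or> r = 14 \<or> r = 50 \<or> r = 84 \<or> r = 104 \<or> r = 152 \<or> r = 164 \<or> r = 194"
    using r by (simp add: line_syndromes_def)
  then show ?thesis
  proof (elim disjE)
    assume "r = 0" then show ?thesis using r0
      by (intro bexI[of _ "{0, 1, 2}"])
        (simp_all add: sub syndrome_def mid_syndrome_def onehot_def mid_bits_def del: One_nat_def)
  next
    assume "r = 14" then show ?thesis using vv
      by (elim disjE; intro bexI[of _ "{1 + v, 3, 5}"])
        (simp_all add: sub syndrome_def mid_syndrome_def onehot_def mid_bits_def del: One_nat_def)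
  next
    assume "r = 50" then show ?thesis using vv
      by (elim disjE; intro bexI[of _ "{1 + v, 7, 9}"])
        (simp_all add: sub syndrome_def mid_syndrome_def onehot_def mid_bits_def del: One_nat_def)
  next
    assume "r = 84" then show ?thesis using vv
      by (elim disjE; intro bexI[of _ "{3 + v, 7, 11}"])
        (simp_all add: sub syndrome_def mid_syndrome_def onehot_def mid_bits_def del: One_nat_def)
  next
    assume "r = 104" then show ?thesis using vv
      by (elim disjE; intro bexI[of _ "{5 + v, 9, 11}"])
        (simp_all add: sub syndrome_def mid_syndrome_def onehot_def mid_bits_def del: One_nat_def)
  next
    assume "r = 152" then show ?thesis using vv
      by (elim disjE; intro bexI[of _ "{5 + v, 7, 13}"])
        (simp_all add: sub syndrome_def mid_syndrome_def onehot_def mid_bits_def del: One_nat_def)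
  next
    assume "r = 164" then show ?thesis using vv
      by (elim disjE; intro bexI[of _ "{3 + v, 9, 13}"])
        (simp_all add: sub syndrome_def mid_syndrome_def onehot_def mid_bits_def del: One_nat_def)
  next
    assume "r = 194" then show ?thesis using vv
      by (elim disjE; intro bexI[of _ "{1 + v, 11, 13}"])
        (simp_all add: sub syndrome_def mid_syndrome_def onehot_def mid_bits_def del: One_nat_def)
  qed
qed

lemma code_triple_with_mid_syndrome:
  assumes g: "switching g" and n: "n \<ge> 15" and r: "r \<in> set line_syndromes"
  obtains b where "b \<in> code_triples n g" "mid_syndrome b = r"
proof -
  have "g r \<le> 1" "r = 0 \<Longrightarrow> g r = 0" using g by (auto simp: switching_def)
  then obtain b where "b \<in> words n" "card b = 3" "syndrome b = g r" "mid_syndrome b = r"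
    using code_triple_exists[OF n r] by blast
  then show ?thesis using that by (simp add: code_triples_def switched_code_def)
qed

lemma mid_syndrome_image_code_triples:
  assumes "switching g" "n \<ge> 15"
  shows "mid_syndrome ` code_triples n g = set line_syndromes"
proof
  show "mid_syndrome ` code_triples n g \<subseteq> set line_syndromes"
    using mid_syndrome_code_triple[OF assms(1)] by blast
  show "set line_syndromes \<subseteq> mid_syndrome ` code_triples n g"
  proof
    fix r assume "r \<in> set line_syndromes"
    then obtain b where "b \<in> code_triples n g" "mid_syndrome b = r"
      by (rule code_triple_with_mid_syndrome[OF assms])
    then show "r \<in> mid_syndrome ` code_triples n g" by blast
  qed
qed

lemma code_triples_eq_iff:
  assumes g1: "switching g1" and g2: "switching g2" and n: "n \<ge> 15"
  shows "code_triples n g1 = code_triples n g2 \<longleftrightarrow> map g1 line_syndromes = map g2 line_syndromes"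
proof
  assume eq: "code_triples n g1 = code_triples n g2"
  have "g1 r = g2 r" if r: "r \<in> set line_syndromes" for r
  proof -
    obtain b where "b \<in> code_triples n g1" "mid_syndrome b = r"
      using code_triple_with_mid_syndrome[OF g1 n r] .
    moreover from this have "b \<in> code_triples n g2" using eq by simp
    ultimately show ?thesis by (auto simp: code_triples_def switched_code_def)
  qed
  then show "map g1 line_syndromes = map g2 line_syndromes" by simp
next
  assume "map g1 line_syndromes = map g2 line_syndromes"
  then have eq: "g1 r = g2 r" if "r \<in> set line_syndromes" for r using that by simp
  have "b \<in> code_triples n g1 \<longleftrightarrow> b \<in> code_triples n g2" for b
  proof
    assume b: "b \<in> code_triples n g1"
    then have "mid_syndrome b \<in> set line_syndromes" by (rule mid_syndrome_code_triple[OF g1])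
    then show "b \<in> code_triples n g2" using b eq by (simp add: code_triples_def switched_code_def)
  next
    assume b: "b \<in> code_triples n g2"
    then have "mid_syndrome b \<in> set line_syndromes" by (rule mid_syndrome_code_triple[OF g2])
    then show "b \<in> code_triples n g1" using b eq by (simp add: code_triples_def switched_code_def)
  qed
  then show "code_triples n g1 = code_triples n g2" by blast
qed

lemma STS_count_switched_code:
  assumes g: "switching g" and n: "n \<ge> 15"
  shows "STS_count (switched_code n g) =
    card ((\<lambda>r. map (translate_switching g r) line_syndromes) ` set line_syndromes)"
proof -
  have "(\<lambda>b. STS (switched_code n g) b) ` STS (switched_code n g) {} =
      (\<lambda>r. code_triples n (translate_switching g r)) ` (mid_syndrome ` code_triples n g)"
    using STS_switched_code by (auto simp: STS_switched_code_empty code_triples_def image_image)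
  also have "\<dots> = (\<lambda>r. code_triples n (translate_switching g r)) ` set line_syndromes"
    by (simp add: mid_syndrome_image_code_triples[OF g n])
  finally have "STS_count (switched_code n g) =
      card ((\<lambda>r. code_triples n (translate_switching g r)) ` set line_syndromes)"
    by (simp add: STS_count_def)
  also have "\<dots> = card ((\<lambda>r. map (translate_switching g r) line_syndromes) ` set line_syndromes)"
    by (rule card_image_eq_if_same_fibres)
      (rule code_triples_eq_iff[OF switching_translate[OF g] switching_translate[OF g] n])
  finally show ?thesis .
qed

section \<open>The homogeneous, non-transitive switched code\<close>

definition mu :: "nat \<Rightarrow> nat" where
  "mu r = (if r \<in> {14, 50, 60, 90} then 1 else 0)"

definition line_span :: "nat list" where
  "line_span = [0, 14, 50, 60, 84, 90, 102, 104, 150, 152, 164, 170, 194, 204, 240, 254]"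

lemma switching_mu: "switching mu"
  by (simp add: switching_def mu_def)

lemma line_span_closed: "h \<in> set line_span \<Longrightarrow> r \<in> set line_syndromes \<Longrightarrow> h XOR r \<in> set line_span"
proof -
  have "\<forall>h\<in>set line_span. \<forall>r\<in>set line_syndromes. h XOR r \<in> set line_span"
    by (simp add: line_span_def line_syndromes_def)
  then show "h \<in> set line_span \<Longrightarrow> r \<in> set line_syndromes \<Longrightarrow> h XOR r \<in> set line_span" by blast
qed

lemma mid_syndrome_xor_onehot_in_line_span:
  "finite y \<Longrightarrow> mid_syndrome y XOR onehot (mid_bits (syndrome y)) \<in> set line_span"
proof (induction y rule: finite_induct)
  case empty
  then show ?case by (simp add: mid_syndrome_def syndrome_def mid_bits_def onehot_def line_span_def)
next
  case (insert j F)
  define u where "u = mid_bits (j + 1)"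
  define U where "U = mid_bits (syndrome F)"
  have "mid_syndrome (insert j F) = onehot u XOR mid_syndrome F"
    using insert by (simp add: mid_syndrome_def u_def)
  moreover have "mid_bits (syndrome (insert j F)) = u XOR U"
    using insert by (simp add: syndrome_def u_def U_def mid_bits_xor)
  ultimately have "mid_syndrome (insert j F) XOR onehot (mid_bits (syndrome (insert j F))) =
      (mid_syndrome F XOR onehot U) XOR line_syndrome u U"
    by (simp add: line_syndrome_def xor.assoc xor.commute xor.left_commute)
  then show ?case
    using insert line_span_closed line_syndrome_mem[OF mid_bits_less mid_bits_less]
    by (simp add: u_def U_def)
qed

lemma mid_syndrome_codeword:
  assumes "switching g" "y \<in> switched_code n g"
  shows "mid_syndrome y \<in> set line_span"
proof -
  have "finite y" "syndrome y \<le> 1"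
    using assms by (auto simp: switched_code_def switching_def intro: words_finite)
  then have "mid_bits (syndrome y) = 0" by (simp add: mid_bits_le_1)
  then show ?thesis
    using mid_syndrome_xor_onehot_in_line_span[OF \<open>finite y\<close>] by (simp add: onehot_def)
qed

definition homogenizer_GL3 :: "nat \<Rightarrow> nat \<Rightarrow> nat" where
  "homogenizer_GL3 d = (if d \<in> {14, 50, 84, 104, 152, 164, 194, 254}
     then (\<lambda>u. [0, 2, 3, 1, 6, 4, 5, 7] ! u) else (\<lambda>u. u))"

definition homogenizer_flips :: "nat \<Rightarrow> nat set" where
  "homogenizer_flips d =
    (if d \<in> {14, 90} then {1, 2, 4} else if d \<in> {50, 60} then {1, 2, 3}
     else if d \<in> {102, 104} then {3, 4} else if d \<in> {150, 170} then {2, 4}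
     else if d \<in> {152, 254} then {1, 2, 3, 4} else if d \<in> {164, 194} then {3}
     else if d \<in> {204, 240} then {1} else {})"

lemma in_GL3_homogenizer: "in_GL3 (homogenizer_GL3 d)"
  unfolding in_GL3_def homogenizer_GL3_def all_less_8 by simp

lemma homogenizer_compatible:
  assumes "d \<in> set line_span"
  shows "relabel_compatible (homogenizer_GL3 d) (homogenizer_flips d) (translate_switching mu d) mu"
proof -
  have "d = 0 \<or> d = 14 \<or> d = 50 \<or> d = 60 \<or> d = 84 \<or> d = 90 \<or> d = 102 \<or> d = 104 \<or> d = 150 \<or>
        d = 152 \<or> d = 164 \<or> d = 170 \<or> d = 194 \<or> d = 204 \<or> d = 240 \<or> d = 254"
    using assms by (simp add: line_span_def)
  then show ?thesis
    by (elim disjE; simp only: relabel_compatible_def all_less_8;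
        simp add: homogenizer_GL3_def homogenizer_flips_def translate_switching_def mu_def
          line_syndrome_def flip_parity_def onehot_def)
qed

lemma homogeneous_switched_code_mu:
  assumes n: "n = 2 ^ k - 1" and k: "k \<ge> 4"
  shows "homogeneous_code n (switched_code n mu)"
  unfolding homogeneous_code_def
proof
  fix y assume y: "y \<in> switched_code n mu"
  define d where "d = mid_syndrome y"
  let ?\<pi> = "relabel_perm n (homogenizer_GL3 d) (homogenizer_flips d)"
  have d: "d \<in> set line_span" using mid_syndrome_codeword[OF switching_mu y] by (simp add: d_def)
  have B: "0 \<notin> homogenizer_flips d" by (simp add: homogenizer_flips_def)
  have "?\<pi> permutes {0..<n}" by (rule relabel_perm_permutes[OF n k in_GL3_homogenizer B])
  moreover have "perm_code ?\<pi> (code_triples n (translate_switching mu d)) = code_triples n mu"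
    by (rule relabel_perm_code_triples[OF n k in_GL3_homogenizer B switching_translate[OF switching_mu]
          switching_mu homogenizer_compatible[OF d]])
  ultimately show "\<exists>\<pi>. \<pi> permutes {0..<n} \<and>
      perm_code \<pi> (STS (switched_code n mu) y) = STS (switched_code n mu) {}"
    using STS_switched_code[OF y] by (auto simp: STS_switched_code_empty d_def)
qed

lemma STS_count_switched_code_mu:
  "n \<ge> 15 \<Longrightarrow> STS_count (switched_code n mu) = 7"
  by (simp add: STS_count_switched_code[OF switching_mu] line_syndromes_def translate_switching_def
      mu_def)

lemma STS_count_switched_code_mu_150:
  "n \<ge> 15 \<Longrightarrow> STS_count (switched_code n (translate_switching mu 150)) = 6"
  by (simp add: STS_count_switched_code[OF switching_translate[OF switching_mu]] line_syndromes_def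
      translate_switching_def mu_def card_insert_if)

lemma not_transitive_switched_code_mu:
  assumes n: "n \<ge> 15"
  shows "\<not> transitive_code n (switched_code n mu)"
proof
  assume tr: "transitive_code n (switched_code n mu)"
  define y where "y = {1, 3, 7, 13 :: nat}"
  have "mid_syndrome y = 150" "syndrome y = 0"
    by (simp_all add: y_def mid_syndrome_def syndrome_def onehot_def mid_bits_def del: One_nat_def)
  moreover have "y \<in> words n" using n by (auto simp: y_def words_def)
  ultimately have y: "y \<in> switched_code n mu" and "mid_syndrome y = 150"
    by (simp_all add: switched_code_def mu_def)
  then have "wadd y ` switched_code n mu = switched_code n (translate_switching mu 150)"
    using switched_code_translate[OF y] by simp
  then show False
    using STS_count_translate[OF tr y] STS_count_switched_code_mu[OF n]
      STS_count_switched_code_mu_150[OF n] by simp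
qed

theorem theorem5:
  fixes k :: nat
  assumes "2 ^ k - 1 \<ge> (15::nat)"
  shows "\<exists>C. perfect_code (2 ^ k - 1) C \<and> homogeneous_code (2 ^ k - 1) C
             \<and> \<not> transitive_code (2 ^ k - 1) C"
proof -
  have k: "k \<ge> 4"
  proof (rule ccontr)
    assume "\<not> k \<ge> 4"
    then have "(2::nat) ^ k \<le> 2 ^ 3" by (intro power_increasing) simp_all
    then show False using assms by simp
  qed
  then have "k \<ge> 1" by simp
  then show ?thesis
    using perfect_switched_code[OF refl _ switching_mu] homogeneous_switched_code_mu[OF refl k]
      not_transitive_switched_code_mu[OF assms] by blast
qed

end
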